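(* Let $q=3^m$ with $m\ge1$ and $f(x)=x^{q+2}$ on $\mathbb{F}_{q^2}$. Then $W_f(a,b)\in\{-q,0,q,2q\}$ for all $a\in\mathbb{F}_{q^2}$ and $b\in\mathbb{F}_{q^2}^*$.
   Context: The Walsh transform is $W_f(a,b)=\sum_{x\in\mathbb{F}_{q^2}}\xi_3^{\mathrm{Tr}_{\mathbb{F}_{q^2}/\mathbb{F}_3}(bf(x)-ax)}$ with $\xi_3=e^{2\pi i/3}$ and $\mathrm{Tr}_{\mathbb{F}_{q^2}/\mathbb{F}_3}$ the absolute trace. *)

theory Defs
  imports "HOL-Analysis.Analysis"
begin

text \<open>Absolute trace from a finite field of order 3^n (n = degree over F_3) to its prime
  field F_3, the latter viewed as the subset {0, 1, 2} of the field.\<close>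
definition abs_trace3 :: "nat \<Rightarrow> 'a::field \<Rightarrow> 'a" where
  "abs_trace3 n x = (\<Sum>i<n. x ^ (3 ^ i))"

definition xi3 :: complex where
  "xi3 = cis (2 * pi / 3)"

definition xi3_pow :: "'a::field \<Rightarrow> complex" where
  "xi3_pow t = xi3 ^ (THE k. k < 3 \<and> of_nat k = t)"

definition walsh3 :: "nat \<Rightarrow> ('a::{field,finite} \<Rightarrow> 'a) \<Rightarrow> 'a \<Rightarrow> 'a \<Rightarrow> complex" where
  "walsh3 n f a b = (\<Sum>x\<in>UNIV. xi3_pow (abs_trace3 n (b * f x - a * x)))"

end

(*
  Write q = 3^m and F for the field with q^2 elements, and let Tr be the absolute trace.
  Since x^(q+2) permutes F, substituting x by x/c turns W(a, c^(q+2)) into W(a/c, 1), so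
  b = 1 suffices.  Choose theta with theta^q = -theta; then every x in F is uniquely
  u + v theta with u, v in the subfield F_q, and likewise a = alpha + beta theta.
  In characteristic 3 one has Tr y = Tr (-(y + y^q)), and y + y^q is explicit, giving
    Tr (x^(q+2) - a x) = Tr (u (1 - alpha - theta^2 v^2)) + Tr (-beta theta^2 v).
  Summing over u in F_q first, the character sum vanishes unless theta^2 v^2 = 1 - alpha,
  whose solutions in F_q are either none, v = 0, or a pair +-v0.  Hence W = q S with
  S in {0, 1, xi + xi^2, 2} = {0, 1, -1, 2}.
*)
theory Submission
  imports Defs "HOL-Number_Theory.Residues" "HOL-Computational_Algebra.Polynomial"
begin

(* Residues imports HOL-Algebra, whose polynomial record fields would shadow these names. *)
hide_const (open) up_ring.coeff up_ring.monom

section \<open>Cube roots of unity\<close>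

lemma xi3_cube: "xi3 ^ 3 = 1"
proof -
  have "xi3 ^ 3 = cis (real 3 * (2 * pi / 3))"
    unfolding xi3_def by (rule Complex.DeMoivre)
  then show ?thesis by simp
qed

lemma xi3_neq_1: "xi3 \<noteq> 1"
proof
  assume "xi3 = 1"
  then have "Re xi3 = 1" by simp
  then show False by (simp add: xi3_def cos_120)
qed

lemma xi3_power_mod: "xi3 ^ (k mod 3) = xi3 ^ k"
proof -
  have "xi3 ^ k = (xi3 ^ 3) ^ (k div 3) * xi3 ^ (k mod 3)"
    by (metis div_mult_mod_eq power_add power_mult mult.commute)
  then show ?thesis by (simp add: xi3_cube)
qed

lemma cube_root_of_unity_sum:
  fixes z :: "'a::idom"
  assumes "z ^ 3 = 1" "z \<noteq> 1"
  shows "1 + z + z ^ 2 = 0"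
proof -
  have "(z - 1) * (1 + z + z ^ 2) = z ^ 3 - 1"
    by (simp add: algebra_simps power2_eq_square power3_eq_cube)
  with assms show ?thesis by simp
qed

lemma xi3_power_eq_1_iff: "xi3 ^ k = 1 \<longleftrightarrow> 3 dvd k"
proof -
  have "xi3 ^ 2 \<noteq> 1"
  proof
    assume "xi3 ^ 2 = 1"
    then have "xi3 ^ 3 = xi3" by (simp add: power3_eq_cube power2_eq_square)
    with xi3_cube xi3_neq_1 show False by simp
  qed
  moreover have "k mod 3 = 0 \<or> k mod 3 = 1 \<or> k mod 3 = 2" by auto
  ultimately show ?thesis
    using xi3_neq_1 xi3_power_mod[of k] by (auto simp: dvd_eq_mod_eq_0)
qed

lemma xi3_power_add_power_double: "xi3 ^ k + xi3 ^ (2 * k) = (if 3 dvd k then 2 else -1)"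
proof (cases "3 dvd k")
  case False
  have "(xi3 ^ k) ^ 3 = 1"
    by (metis power_mult mult.commute xi3_cube power_one)
  with False have "1 + xi3 ^ k + (xi3 ^ k) ^ 2 = 0"
    by (intro cube_root_of_unity_sum) (simp_all add: xi3_power_eq_1_iff)
  then have "xi3 ^ k + (xi3 ^ k) ^ 2 = -1"
    by (simp add: eq_neg_iff_add_eq_0 ac_simps)
  with False show ?thesis
    by (simp add: power_mult mult.commute)
next
  case True
  then have "xi3 ^ k = 1" "xi3 ^ (2 * k) = 1"
    by (simp_all add: xi3_power_eq_1_iff)
  with True show ?thesis by simp
qed

section \<open>Fields of characteristic 3\<close>

lemma power_power_commute: "(x ^ i) ^ j = (x ^ j) ^ i" for x :: "'a::monoid_mult"
  by (simp add: mult.commute flip: power_mult)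

lemma power_3_power_minus: "(- x :: 'a::ring_1) ^ 3 ^ k = - (x ^ 3 ^ k)"
  by (simp add: power_minus_odd)

context
  assumes CHAR_3: "CHAR('a::field) = 3"
begin

lemma three_eq_zero: "(3::'a) = 0"
  using of_nat_CHAR[where 'a='a] by (simp add: CHAR_3)

lemma two_neq_zero: "(2::'a) \<noteq> 0"
  using of_nat_eq_0_iff_char_dvd[of 2, where 'a='a] by (simp add: CHAR_3)

lemma of_nat_eq_of_nat_iff_mod_3: "(of_nat i :: 'a) = of_nat j \<longleftrightarrow> i mod 3 = j mod 3"
  by (simp add: of_nat_eq_iff_cong_CHAR CHAR_3 cong_def)

lemma xi3_pow_of_nat: "xi3_pow (of_nat k :: 'a) = xi3 ^ k"
proof -
  have "(THE j. j < 3 \<and> (of_nat j :: 'a) = of_nat k) = k mod 3"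
    by (rule the_equality) (auto simp: of_nat_eq_of_nat_iff_mod_3)
  then show ?thesis by (simp add: xi3_pow_def xi3_power_mod)
qed

lemma cube_eq_self_imp_of_nat:
  assumes "(t::'a) ^ 3 = t"
  shows "\<exists>k<3. t = of_nat k"
proof -
  have "t * (t - 1) * (t - 2) = (t ^ 3 - t) + 3 * (t - t ^ 2)"
    by (simp add: algebra_simps power2_eq_square power3_eq_cube)
  also have "\<dots> = 0" using assms three_eq_zero by simp
  finally have "t = of_nat 0 \<or> t = of_nat 1 \<or> t = of_nat 2" by auto
  moreover have "(0::nat) < 3" "(1::nat) < 3" "(2::nat) < 3" by simp_all
  ultimately show ?thesis by blast
qed

lemma frobenius_add: "(x + y :: 'a) ^ 3 ^ k = x ^ 3 ^ k + y ^ 3 ^ k"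
  by (rule freshmans_dream') (simp_all add: CHAR_3)

lemma frobenius_diff: "(x - y :: 'a) ^ 3 ^ k = x ^ 3 ^ k - y ^ 3 ^ k"
  using frobenius_add[of x "- y" k] by (simp add: power_3_power_minus)

lemma frobenius_sum: "(\<Sum>i\<in>A. f i :: 'a) ^ 3 ^ k = (\<Sum>i\<in>A. f i ^ 3 ^ k)"
  by (rule freshmans_dream_sum') (simp_all add: CHAR_3)

lemma abs_trace3_add: "abs_trace3 n (x + y :: 'a) = abs_trace3 n x + abs_trace3 n y"
  by (simp add: abs_trace3_def frobenius_add sum.distrib)

lemma abs_trace3_minus: "abs_trace3 n (- x :: 'a) = - abs_trace3 n x"
  by (simp add: abs_trace3_def power_3_power_minus sum_negf)

lemma abs_trace3_diff: "abs_trace3 n (x - y :: 'a) = abs_trace3 n x - abs_trace3 n y"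
  by (simp add: abs_trace3_def frobenius_diff sum_subtractf)

end

section \<open>Finite fields of order 3^n and their canonical additive character\<close>

(* The library version finite_field_power_card_eq_same is stated for the sort finite_field. *)
lemma power_card_eq_self:
  fixes x :: "'a::{field,finite}"
  shows "x ^ CARD('a) = x"
proof (cases "x = 0")
  case False
  define U where "U = UNIV - {0::'a}"
  have "(\<Prod>y\<in>U. x * y) = (\<Prod>y\<in>U. y)"
    unfolding U_def
    by (rule prod.reindex_bij_witness[of _ "\<lambda>y. y / x" "\<lambda>y. x * y"]) (use False in auto)
  moreover have "(\<Prod>y\<in>U. x * y) = x ^ card U * (\<Prod>y\<in>U. y)"
    by (simp add: prod.distrib)
  moreover have "(\<Prod>y\<in>U. y) \<noteq> 0"
    unfolding U_def by simp
  ultimately have "x ^ card U = 1" by simp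
  moreover have "CARD('a) = Suc (card U)"
    unfolding U_def by (simp add: card_Diff_singleton card_gt_0_iff Suc_diff_1)
  ultimately show ?thesis by simp
qed (simp add: power_0_left)

definition trace_char :: "nat \<Rightarrow> 'a::field \<Rightarrow> complex" where
  "trace_char n x = xi3_pow (abs_trace3 n x)"

lemma walsh3_eq_sum_trace_char:
  "walsh3 n f a b = (\<Sum>x\<in>UNIV. trace_char n (b * f x - a * x))"
  by (simp add: walsh3_def trace_char_def)

lemma walsh3_power_scale:
  fixes a c :: "'a::{field,finite}"
  assumes "c \<noteq> 0"
  shows "walsh3 n (\<lambda>x. x ^ k) a (c ^ k) = walsh3 n (\<lambda>x. x ^ k) (a / c) 1"
  unfolding walsh3_eq_sum_trace_char
proof (rule sum.reindex_bij_witness[of _ "\<lambda>y. y / c" "\<lambda>x. c * x"])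
  fix x :: 'a
  show "trace_char n (1 * (c * x) ^ k - a / c * (c * x)) = trace_char n (c ^ k * x ^ k - a * x)"
    using assms by (simp add: power_mult_distrib)
qed (use assms in auto)

context
  fixes n :: nat
  assumes CARD_eq: "CARD('a::{field,finite}) = 3 ^ n"
begin

lemma CHAR_eq_3: "CHAR('a) = 3"
proof -
  have "prime CHAR('a)"
    by (intro prime_CHAR_semidom finite_imp_CHAR_pos) simp
  moreover have "CHAR('a) dvd 3 ^ n"
    using CHAR_dvd_CARD[where 'a='a] CARD_eq by simp
  ultimately have "CHAR('a) dvd 3"
    by (rule prime_dvd_power)
  with \<open>prime CHAR('a)\<close> show ?thesis
    by (intro primes_dvd_imp_eq) simp_all
qed

lemma power_3_power_eq_self: "(x::'a) ^ 3 ^ n = x"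
  using power_card_eq_self[of x] CARD_eq by simp

lemma abs_trace3_power_3: "abs_trace3 n ((x::'a) ^ 3) = abs_trace3 n x"
proof -
  define f where "f i = x ^ 3 ^ i" for i
  have "f 0 + (\<Sum>i<n. f (Suc i)) = (\<Sum>i<Suc n. f i)"
    by (rule sum.lessThan_Suc_shift[symmetric])
  also have "\<dots> = (\<Sum>i<n. f i) + f 0"
    by (simp add: f_def power_3_power_eq_self)
  finally have "(\<Sum>i<n. f (Suc i)) = (\<Sum>i<n. f i)"
    by simp
  then show ?thesis
    by (simp add: abs_trace3_def f_def flip: power_mult)
qed

lemma abs_trace3_power_3_power: "abs_trace3 n ((x::'a) ^ 3 ^ k) = abs_trace3 n x"
proof (induction k)
  case (Suc k)
  have "x ^ 3 ^ Suc k = (x ^ 3 ^ k) ^ 3"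
    by (metis power_Suc2 power_mult)
  with Suc show ?case
    by (simp add: abs_trace3_power_3)
qed simp

lemma abs_trace3_cube: "abs_trace3 n (x::'a) ^ 3 = abs_trace3 n x"
proof -
  have "abs_trace3 n x ^ 3 ^ 1 = abs_trace3 n (x ^ 3)"
    unfolding abs_trace3_def frobenius_sum[OF CHAR_eq_3]
    by (simp flip: power_mult add: mult.commute)
  then show ?thesis
    by (simp add: abs_trace3_power_3)
qed

lemma abs_trace3_eq_of_nat: "\<exists>k<3. abs_trace3 n (x::'a) = of_nat k"
  by (rule cube_eq_self_imp_of_nat[OF CHAR_eq_3 abs_trace3_cube])

lemma trace_char_of_nat:
  assumes "abs_trace3 n (x::'a) = of_nat k"
  shows "trace_char n x = xi3 ^ k"
  using assms by (simp add: trace_char_def xi3_pow_of_nat[OF CHAR_eq_3])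

lemma trace_char_add: "trace_char n ((x::'a) + y) = trace_char n x * trace_char n y"
proof -
  obtain i j where ij: "abs_trace3 n x = of_nat i" "abs_trace3 n y = of_nat j"
    using abs_trace3_eq_of_nat by metis
  then have "trace_char n (x + y) = xi3 ^ (i + j)"
    by (intro trace_char_of_nat) (simp add: abs_trace3_add[OF CHAR_eq_3])
  with ij show ?thesis
    by (simp add: trace_char_of_nat power_add)
qed

lemma trace_char_zero: "trace_char n (0::'a) = 1"
proof -
  have "abs_trace3 n (0::'a) = of_nat 0"
    by (simp add: abs_trace3_def power_0_left)
  from trace_char_of_nat[OF this] show ?thesis
    by simp
qed

lemma trace_char_eq_1_iff: "trace_char n (x::'a) = 1 \<longleftrightarrow> abs_trace3 n x = 0"
proof -
  obtain k where "abs_trace3 n x = of_nat k"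
    using abs_trace3_eq_of_nat by metis
  then show ?thesis
    by (simp add: trace_char_of_nat xi3_power_eq_1_iff of_nat_eq_0_iff_char_dvd CHAR_eq_3)
qed

lemma trace_char_add_minus: "trace_char n (x::'a) + trace_char n (- x) \<in> {2, -1}"
proof -
  obtain k where k: "abs_trace3 n x = of_nat k"
    using abs_trace3_eq_of_nat by metis
  have "of_nat (2 * k) + of_nat k = (of_nat (3 * k) :: 'a)"
    by simp
  then have "trace_char n (- x) = xi3 ^ (2 * k)"
    using k three_eq_zero[OF CHAR_eq_3]
    by (intro trace_char_of_nat) (simp add: abs_trace3_minus[OF CHAR_eq_3] eq_neg_iff_add_eq_0)
  with k show ?thesis
    by (simp add: trace_char_of_nat xi3_power_add_power_double)
qed

lemma sum_trace_char_symmetric_roots: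
  fixes c d :: 'a
  assumes roots: "Z \<subseteq> {v. v ^ 2 = d}" and symmetric: "\<And>v. v \<in> Z \<Longrightarrow> - v \<in> Z"
  shows "(\<Sum>v\<in>Z. trace_char n (c * v)) \<in> {-1, 0, 1, 2}"
proof (cases "Z = {}")
  case False
  then obtain v0 where v0: "v0 \<in> Z" by blast
  have "Z \<subseteq> {v0, - v0}"
  proof
    fix v assume "v \<in> Z"
    with roots v0 have "v ^ 2 = v0 ^ 2" by auto
    then show "v \<in> {v0, - v0}" by (simp add: power2_eq_iff)
  qed
  with symmetric v0 have Z: "Z = {v0, - v0}"
    by blast
  show ?thesis
  proof (cases "v0 = 0")
    case True
    with Z show ?thesis by (simp add: trace_char_zero)
  next
    case False
    have "v0 \<noteq> - v0"
    proof
      assume "v0 = - v0"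
      then have "2 * v0 = 0"
        by (metis mult_2 eq_neg_iff_add_eq_0)
      with False two_neq_zero[OF CHAR_eq_3] show False
        by simp
    qed
    with Z have "(\<Sum>v\<in>Z. trace_char n (c * v)) = trace_char n (c * v0) + trace_char n (- (c * v0))"
      by simp
    then show ?thesis
      using trace_char_add_minus[of "c * v0"] by auto
  qed
qed simp

end

section \<open>The field of order q^2 over its subfield of order q\<close>

lemma poly_nonroot_exists:
  fixes p :: "'a::{comm_ring_1,ring_no_zero_divisors} poly"
  assumes "p \<noteq> 0" "degree p < card S"
  shows "\<exists>x\<in>S. poly p x \<noteq> 0"
proof (rule ccontr)
  assume "\<not> ?thesis"
  then have "S \<subseteq> {x. poly p x = 0}"
    by auto
  then have "card S \<le> card {x. poly p x = 0}"
    by (intro card_mono poly_roots_finite assms)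
  also have "\<dots> \<le> degree p"
    by (rule card_poly_roots_bound[OF assms(1)])
  finally show False
    using assms(2) by simp
qed

lemma abs_trace3_add_index:
  "abs_trace3 (i + j) (x::'a::field) = abs_trace3 i x + abs_trace3 j (x ^ 3 ^ i)"
proof (induction j)
  case (Suc j)
  have "(x ^ 3 ^ i) ^ 3 ^ j = x ^ 3 ^ (i + j)"
    by (simp add: power_add flip: power_mult)
  with Suc show ?case
    by (simp add: abs_trace3_def)
qed (simp add: abs_trace3_def)

lemma abs_trace3_nonzero_on:
  fixes S :: "'a::field set"
  assumes "n \<ge> 1" "3 ^ (n - 1) < card S"
  shows "\<exists>x\<in>S. abs_trace3 n x \<noteq> 0"
proof -
  define p :: "'a poly" where "p = (\<Sum>i<n. monom 1 (3 ^ i))"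
  have "coeff p 1 = (\<Sum>i<n. if i = 0 then 1 else 0)"
    unfolding p_def coeff_sum by (intro sum.cong) auto
  also have "\<dots> = 1"
    using assms(1) by simp
  finally have "p \<noteq> 0"
    by auto
  moreover have "degree p \<le> 3 ^ (n - 1)"
    unfolding p_def
  proof (rule degree_sum_le)
    fix i assume "i \<in> {..<n}"
    then have "(3::nat) ^ i \<le> 3 ^ (n - 1)"
      by (intro power_increasing) auto
    then show "degree (monom (1::'a) (3 ^ i)) \<le> 3 ^ (n - 1)"
      using degree_monom_le order_trans by blast
  qed simp
  ultimately obtain x where "x \<in> S" "poly p x \<noteq> 0"
    using poly_nonroot_exists assms(2) by (metis le_less_trans)
  moreover have "poly p x = abs_trace3 n x"
    by (simp add: p_def poly_sum poly_monom abs_trace3_def)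
  ultimately show ?thesis
    by auto
qed

context
  fixes m :: nat
  assumes CARD_eq: "CARD('a::{field,finite}) = 3 ^ (2 * m)" and m_pos: "m \<ge> 1"
begin

abbreviation q :: nat where
  "q \<equiv> 3 ^ m"

abbreviation Fq :: "'a set" where
  "Fq \<equiv> {u. u ^ q = u}"

lemma conj_conj: "((x::'a) ^ q) ^ q = x"
  using power_3_power_eq_self[OF CARD_eq, of x]
  by (simp add: mult_2 power_add flip: power_mult)

lemma conj_add: "((x::'a) + y) ^ q = x ^ q + y ^ q"
  by (rule frobenius_add[OF CHAR_eq_3[OF CARD_eq]])

lemma conj_diff: "((x::'a) - y) ^ q = x ^ q - y ^ q"
  by (rule frobenius_diff[OF CHAR_eq_3[OF CARD_eq]])

lemma exists_conj_eq_minus: "\<exists>\<theta>::'a. \<theta> \<noteq> 0 \<and> \<theta> ^ q = - \<theta>"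
proof -
  define p :: "'a poly" where "p = monom 1 q - [:0, 1:]"
  have "q \<noteq> 1"
    using m_pos by simp
  then have "coeff p 1 = -1"
    unfolding p_def by simp
  then have "p \<noteq> 0"
    by auto
  moreover have "degree p < card (UNIV :: 'a set)"
  proof -
    have "degree p \<le> q"
      unfolding p_def by (intro degree_diff_le degree_monom_le) (simp add: degree_pCons_eq_if)
    also have "\<dots> < 3 ^ (2 * m)"
      using m_pos by (intro power_strict_increasing) auto
    finally show ?thesis
      by (simp add: CARD_eq)
  qed
  ultimately obtain x where "poly p x \<noteq> 0"
    using poly_nonroot_exists by blast
  then have "x ^ q \<noteq> x"
    by (simp add: p_def poly_monom)
  then show ?thesis
    by (intro exI[of _ "x - x ^ q"]) (simp add: conj_diff conj_conj)
qed

lemma abs_trace3_add_conj: "abs_trace3 (2 * m) ((y::'a) + y ^ q) = - abs_trace3 (2 * m) y"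
proof -
  have "abs_trace3 (2 * m) (y + y ^ q) = abs_trace3 (2 * m) y + abs_trace3 (2 * m) y"
    by (simp add: abs_trace3_add[OF CHAR_eq_3[OF CARD_eq]] abs_trace3_power_3_power[OF CARD_eq])
  also have "\<dots> = 3 * abs_trace3 (2 * m) y - abs_trace3 (2 * m) y"
    by simp
  finally show ?thesis
    by (simp add: three_eq_zero[OF CHAR_eq_3[OF CARD_eq]])
qed

context
  fixes \<theta> :: 'a
  assumes theta_nonzero: "\<theta> \<noteq> 0" and conj_theta: "\<theta> ^ q = - \<theta>"
begin

lemma conj_decomposition:
  assumes "u \<in> Fq" "v \<in> Fq"
  shows "(u + v * \<theta>) ^ q = u - v * \<theta>"
  using assms by (simp add: conj_add power_mult_distrib conj_theta)

lemma bij_betw_decomposition: "bij_betw (\<lambda>(u, v). u + v * \<theta>) (Fq \<times> Fq) UNIV"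
proof (rule bij_betw_byWitness)
  define g where "g x = ((x + x ^ q) / 2, (x - x ^ q) / (2 * \<theta>))" for x :: 'a
  have two: "(2::'a) \<noteq> 0" "(2::'a) ^ q = 2"
    using two_neq_zero[OF CHAR_eq_3[OF CARD_eq]] conj_add[of 1 1] by simp_all
  show "\<forall>p\<in>Fq \<times> Fq. g ((\<lambda>(u, v). u + v * \<theta>) p) = p"
    using two theta_nonzero by (auto simp: g_def conj_decomposition field_simps)
  show "\<forall>x\<in>UNIV. (\<lambda>(u, v). u + v * \<theta>) (g x) = x"
    using two theta_nonzero by (auto simp: g_def field_simps)
  show "g ` UNIV \<subseteq> Fq \<times> Fq"
    using two theta_nonzero
    by (auto simp: g_def power_divide power_mult_distrib conj_add conj_diff conj_conj conj_theta field_simps)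
qed auto

lemma sum_decomposition: "(\<Sum>x\<in>UNIV. g x) = (\<Sum>v\<in>Fq. \<Sum>u\<in>Fq. g (u + v * \<theta>))"
proof -
  have "(\<Sum>x\<in>UNIV. g x) = (\<Sum>(u, v)\<in>Fq \<times> Fq. g (u + v * \<theta>))"
    using sum.reindex_bij_betw[OF bij_betw_decomposition, of g] by (simp add: case_prod_unfold)
  also have "\<dots> = (\<Sum>u\<in>Fq. \<Sum>v\<in>Fq. g (u + v * \<theta>))"
    by (rule sum.cartesian_product[symmetric])
  also have "\<dots> = (\<Sum>v\<in>Fq. \<Sum>u\<in>Fq. g (u + v * \<theta>))"
    by (rule sum.swap)
  finally show ?thesis .
qed

lemma trace_char_decomposition:
  assumes "u \<in> Fq" "v \<in> Fq" "\<alpha> \<in> Fq" "\<beta> \<in> Fq"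
  shows "trace_char (2 * m) ((u + v * \<theta>) ^ (q + 2) - (\<alpha> + \<beta> * \<theta>) * (u + v * \<theta>))
    = trace_char (2 * m) (u * (1 - \<alpha> - \<theta> ^ 2 * v ^ 2)) * trace_char (2 * m) (- (\<beta> * \<theta> ^ 2) * v)"
proof -
  define y where "y = (u + v * \<theta>) ^ (q + 2) - (\<alpha> + \<beta> * \<theta>) * (u + v * \<theta>)"
  define T where "T = u ^ 3 + u * (1 - \<alpha> - \<theta> ^ 2 * v ^ 2) - u + - (\<beta> * \<theta> ^ 2) * v"
  have "y ^ q = ((u + v * \<theta>) ^ q) ^ q * ((u + v * \<theta>) ^ q) ^ 2
      - (\<alpha> + \<beta> * \<theta>) ^ q * (u + v * \<theta>) ^ q"
    unfolding y_def power_add conj_diff power_mult_distrib by (simp add: mult.commute flip: power_mult)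
  also have "\<dots> = (u + v * \<theta>) * (u - v * \<theta>) ^ 2 - (\<alpha> - \<beta> * \<theta>) * (u - v * \<theta>)"
    using assms by (simp add: conj_conj conj_decomposition conj_diff power_mult_distrib conj_theta)
  finally have conj_y: "y ^ q = \<dots>" .
  have "y + y ^ q + T = 3 * (u ^ 3 - u * v ^ 2 * \<theta> ^ 2 - \<alpha> * u - \<beta> * v * \<theta> ^ 2)"
    unfolding conj_y
    unfolding y_def T_def power_add conj_decomposition[OF assms(1,2)]
    by (simp add: algebra_simps power2_eq_square power3_eq_cube)
  then have "y + y ^ q = - T"
    using three_eq_zero[OF CHAR_eq_3[OF CARD_eq]] by (simp add: add_eq_0_iff2)
  then have "abs_trace3 (2 * m) y = abs_trace3 (2 * m) T"
    using abs_trace3_add_conj[of y] abs_trace3_minus[OF CHAR_eq_3[OF CARD_eq]] by simp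
  also have "\<dots> = abs_trace3 (2 * m) (u * (1 - \<alpha> - \<theta> ^ 2 * v ^ 2) + - (\<beta> * \<theta> ^ 2) * v)"
    using abs_trace3_power_3[OF CARD_eq, of u]
    by (simp add: T_def abs_trace3_add[OF CHAR_eq_3[OF CARD_eq]] abs_trace3_diff[OF CHAR_eq_3[OF CARD_eq]])
  finally have "trace_char (2 * m) y
      = trace_char (2 * m) (u * (1 - \<alpha> - \<theta> ^ 2 * v ^ 2) + - (\<beta> * \<theta> ^ 2) * v)"
    by (simp add: trace_char_def)
  then show ?thesis
    unfolding y_def by (simp only: trace_char_add[OF CARD_eq])
qed

end

lemma card_Fq: "card Fq = q"
proof -
  obtain \<theta> :: 'a where "\<theta> \<noteq> 0" "\<theta> ^ q = - \<theta>"
    using exists_conj_eq_minus by blast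
  then have "card (Fq \<times> Fq) = CARD('a)"
    by (rule bij_betw_same_card[OF bij_betw_decomposition])
  then have "card Fq ^ 2 = q ^ 2"
    by (simp add: CARD_eq card_cartesian_product power2_eq_square mult_2 power_add)
  then show ?thesis
    by (simp add: power_eq_iff_eq_base)
qed

lemma exists_Fq_trace_nonzero: "\<exists>w\<in>Fq. abs_trace3 (2 * m) w \<noteq> 0"
proof -
  have "3 ^ (m - 1) < card Fq"
    using m_pos by (simp add: card_Fq)
  then obtain w where w: "w \<in> Fq" "abs_trace3 m w \<noteq> 0"
    using abs_trace3_nonzero_on[OF m_pos] by blast
  have "abs_trace3 (2 * m) w = abs_trace3 m w + abs_trace3 m (w ^ q)"
    by (metis abs_trace3_add_index mult_2)
  also have "\<dots> = 2 * abs_trace3 m w"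
    using w(1) by simp
  finally show ?thesis
    using w two_neq_zero[OF CHAR_eq_3[OF CARD_eq]] by auto
qed

lemma sum_trace_char_Fq: "(\<Sum>u\<in>Fq. trace_char (2 * m) u) = 0"
proof -
  obtain w where w: "w \<in> Fq" "abs_trace3 (2 * m) w \<noteq> 0"
    using exists_Fq_trace_nonzero by blast
  have "(\<Sum>u\<in>Fq. trace_char (2 * m) u) = (\<Sum>u\<in>Fq. trace_char (2 * m) (u + w))"
    by (rule sum.reindex_bij_witness[of _ "\<lambda>u. u + w" "\<lambda>u. u - w"])
       (use w in \<open>auto simp: conj_add conj_diff\<close>)
  also have "\<dots> = (\<Sum>u\<in>Fq. trace_char (2 * m) u) * trace_char (2 * m) w"
    by (simp add: trace_char_add[OF CARD_eq] sum_distrib_right)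
  finally show ?thesis
    using w(2) trace_char_eq_1_iff[OF CARD_eq] by simp
qed

lemma sum_trace_char_Fq_mult:
  assumes "c \<in> Fq"
  shows "(\<Sum>u\<in>Fq. trace_char (2 * m) (u * c)) = (if c = 0 then q else 0)"
proof (cases "c = 0")
  case True
  then show ?thesis
    by (simp add: trace_char_zero[OF CARD_eq] card_Fq)
next
  case False
  have "(\<Sum>u\<in>Fq. trace_char (2 * m) (u * c)) = (\<Sum>u\<in>Fq. trace_char (2 * m) u)"
    by (rule sum.reindex_bij_witness[of _ "\<lambda>u. u / c" "\<lambda>u. u * c"])
       (use assms False in \<open>auto simp: power_mult_distrib power_divide\<close>)
  with False show ?thesis
    by (simp add: sum_trace_char_Fq)
qed

lemma inj_power_q_plus_2: "inj (\<lambda>x::'a. x ^ (q + 2))"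
proof (rule injI)
  fix x y :: 'a
  assume eq: "x ^ (q + 2) = y ^ (q + 2)"
  show "x = y"
  proof (cases "y = 0")
    case True
    with eq show ?thesis by simp
  next
    case False
    define z where "z = x / y"
    have z_nonzero: "z \<noteq> 0"
      using eq False by (auto simp: z_def)
    have "z ^ (q + 2) = 1"
      using eq False by (simp add: z_def power_divide)
    then have z_power: "z ^ q * z ^ 2 = 1"
      by (simp only: power_add)
    then have "(z ^ q) ^ q * (z ^ 2) ^ q = 1"
      by (metis power_mult_distrib power_one)
    then have z_power_conj: "z * (z ^ q) ^ 2 = 1"
      by (simp only: conj_conj power_power_commute[of z 2])
    have "z * z ^ q * (z - z ^ q) = z ^ q * z ^ 2 - z * (z ^ q) ^ 2"
      by (simp add: algebra_simps power2_eq_square)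
    also have "\<dots> = 0"
      using z_power z_power_conj by simp
    finally have "z ^ q = z"
      using z_nonzero by simp
    with z_power have "z ^ 3 = 1"
      by (simp add: power2_eq_square power3_eq_cube mult.assoc)
    then have "(z - 1) ^ 3 = 0"
      using frobenius_diff[OF CHAR_eq_3[OF CARD_eq], of z 1 1] by simp
    then have "z = 1"
      by simp
    with False show ?thesis
      by (simp add: z_def)
  qed
qed

lemma walsh3_power_q_plus_2_at_1:
  fixes a :: 'a
  shows "walsh3 (2 * m) (\<lambda>x. x ^ (q + 2)) a 1
     \<in> {- of_nat q, 0, of_nat q, 2 * of_nat q}"
proof -
  obtain \<theta> :: 'a where \<theta>: "\<theta> \<noteq> 0" "\<theta> ^ q = - \<theta>"
    using exists_conj_eq_minus by blast
  then have "a \<in> (\<lambda>(u, v). u + v * \<theta>) ` (Fq \<times> Fq)"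
    using bij_betw_decomposition[OF \<theta>] by (simp add: bij_betw_def)
  then obtain \<alpha> \<beta> where \<alpha>\<beta>: "\<alpha> \<in> Fq" "\<beta> \<in> Fq" "a = \<alpha> + \<beta> * \<theta>"
    by auto
  define c where "c v = 1 - \<alpha> - \<theta> ^ 2 * v ^ 2" for v
  define e where "e v = trace_char (2 * m) (- (\<beta> * \<theta> ^ 2) * v)" for v
  define Z where "Z = Fq \<inter> {v. c v = 0}"
  have c_Fq: "c v \<in> Fq" if "v \<in> Fq" for v
    using that \<alpha>\<beta> \<theta> by (simp add: c_def conj_diff power_mult_distrib power_power_commute[of _ 2])
  have "walsh3 (2 * m) (\<lambda>x. x ^ (q + 2)) a 1
      = (\<Sum>v\<in>Fq. \<Sum>u\<in>Fq. trace_char (2 * m) ((u + v * \<theta>) ^ (q + 2) - a * (u + v * \<theta>)))"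
    by (simp only: walsh3_eq_sum_trace_char sum_decomposition[OF \<theta>] mult_1_left)
  also have "\<dots> = (\<Sum>v\<in>Fq. \<Sum>u\<in>Fq. trace_char (2 * m) (u * c v) * e v)"
    unfolding \<alpha>\<beta>(3) c_def e_def
    using \<alpha>\<beta> by (intro sum.cong refl) (simp only: trace_char_decomposition[OF \<theta>])
  also have "\<dots> = (\<Sum>v\<in>Fq. (\<Sum>u\<in>Fq. trace_char (2 * m) (u * c v)) * e v)"
    by (simp only: sum_distrib_right)
  also have "\<dots> = (\<Sum>v\<in>Fq. (if c v = 0 then q else 0) * e v)"
    by (intro sum.cong refl) (simp only: c_Fq sum_trace_char_Fq_mult)
  also have "\<dots> = q * (\<Sum>v\<in>Fq. if v \<in> {v. c v = 0} then e v else 0)"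
    unfolding sum_distrib_left by (intro sum.cong refl) simp
  also have "\<dots> = q * (\<Sum>v\<in>Z. e v)"
    by (simp only: Z_def sum.inter_restrict[OF finite])
  finally have walsh: "walsh3 (2 * m) (\<lambda>x. x ^ (q + 2)) a 1 = q * (\<Sum>v\<in>Z. e v)" .
  have "Z \<subseteq> {v. v ^ 2 = (1 - \<alpha>) / \<theta> ^ 2}"
    using \<theta>(1) by (auto simp: Z_def c_def field_simps)
  moreover have "- v \<in> Z" if "v \<in> Z" for v
    using that by (simp add: Z_def c_def power_3_power_minus)
  ultimately have "(\<Sum>v\<in>Z. e v) \<in> {-1, 0, 1, 2}"
    unfolding e_def by (rule sum_trace_char_symmetric_roots[OF CARD_eq])
  with walsh show ?thesis
    by auto
qed

end

theorem proposition10: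
  fixes m :: nat and a b :: "'a::{field,finite}"
  assumes "m \<ge> 1"
    and "CARD('a) = 3 ^ (2 * m)"
    and "b \<noteq> 0"
  shows "walsh3 (2 * m) (\<lambda>x. x ^ (3 ^ m + 2)) a b
           \<in> {- of_nat (3 ^ m), 0, of_nat (3 ^ m), 2 * of_nat (3 ^ m)}"
proof -
  have "surj (\<lambda>x::'a. x ^ (3 ^ m + 2))"
    using inj_power_q_plus_2[OF assms(2,1)] by (simp add: finite_UNIV_inj_surj)
  then obtain c :: 'a where c: "b = c ^ (3 ^ m + 2)"
    by blast
  with assms(3) have "c \<noteq> 0"
    by auto
  then have "walsh3 (2 * m) (\<lambda>x. x ^ (3 ^ m + 2)) a b = walsh3 (2 * m) (\<lambda>x. x ^ (3 ^ m + 2)) (a / c) 1"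
    unfolding c by (rule walsh3_power_scale)
  then show ?thesis
    using walsh3_power_q_plus_2_at_1[OF assms(2,1)] by simp
qed

end
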